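(* Let $m$ and $k$ be positive integers such that $2m-1<R(m-k,3)$ and $m\ge k+3$. Then $F_v(2_r;r-k+1)\le r+m$ for every integer $r\ge m-1$.
   Context: All graphs are finite, simple and undirected. $\mathrm{cl}(G)$ is the clique number of $G$. $G\overset{v}{\to}(2_r)$ means that in every partition of $V(G)$ into $r$ pairwise disjoint parts some part contains an edge (equivalently $\chi(G)\ge r+1$). $H_v(2_r;q)$ is the set of graphs $G$ with $G\overset{v}{\to}(2_r)$ and $\mathrm{cl}(G)<q$; $F_v(2_r;q)=\min\{|V(G)|:G\in H_v(2_r;q)\}$. The Ramsey number $R(p,3)$ is the least $n$ such that every graph on at least $n$ vertices has a $p$-clique or an independent set of size $3$. *)

theory Defs
  imports Main
begin

text \<open>Finite simple graphs, represented with vertex set V :: nat set (every finite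
graph is isomorphic to one on natural numbers) and edge set E of 2-element subsets of V.\<close>

definition simple_graph :: "nat set \<Rightarrow> nat set set \<Rightarrow> bool" where
  "simple_graph V E \<longleftrightarrow> finite V \<and> (\<forall>e\<in>E. e \<subseteq> V \<and> card e = 2)"

definition is_clique :: "nat set \<Rightarrow> nat set set \<Rightarrow> nat set \<Rightarrow> bool" where
  "is_clique V E S \<longleftrightarrow> S \<subseteq> V \<and> (\<forall>x\<in>S. \<forall>y\<in>S. x \<noteq> y \<longrightarrow> {x, y} \<in> E)"

definition is_indep :: "nat set \<Rightarrow> nat set set \<Rightarrow> nat set \<Rightarrow> bool" where
  "is_indep V E S \<longleftrightarrow> S \<subseteq> V \<and> (\<forall>x\<in>S. \<forall>y\<in>S. x \<noteq> y \<longrightarrow> {x, y} \<notin> E)"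

definition clique_number :: "nat set \<Rightarrow> nat set set \<Rightarrow> nat" where
  "clique_number V E = Max (card ` {S. is_clique V E S})"

text \<open>G -v-> (2_r): every partition of V into r pairwise disjoint (possibly empty)
parts has a part containing an edge; a partition into r parts is given by a map
V \<rightarrow> {0..<r}.\<close>
definition vertex_arrow :: "nat set \<Rightarrow> nat set set \<Rightarrow> nat \<Rightarrow> bool" where
  "vertex_arrow V E r \<longleftrightarrow>
     (\<forall>f :: nat \<Rightarrow> nat. f ` V \<subseteq> {..<r} \<longrightarrow>
        (\<exists>x\<in>V. \<exists>y\<in>V. x \<noteq> y \<and> f x = f y \<and> {x, y} \<in> E))"

definition Hv :: "nat \<Rightarrow> nat \<Rightarrow> (nat set \<times> nat set set) set" where
  "Hv r q = {(V, E). simple_graph V E \<and> vertex_arrow V E r \<and> clique_number V E < q}"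

definition Fv :: "nat \<Rightarrow> nat \<Rightarrow> nat" where
  "Fv r q = (LEAST n. \<exists>(V, E) \<in> Hv r q. card V = n)"

definition ramsey_R :: "nat \<Rightarrow> nat \<Rightarrow> nat" where
  "ramsey_R p s = (LEAST n. \<forall>V E. simple_graph V E \<and> card V \<ge> n \<longrightarrow>
      (\<exists>S. is_clique V E S \<and> card S = p) \<or> (\<exists>S. is_indep V E S \<and> card S = s))"

end

theory Submission
  imports Defs
begin

(* Since 2m-1 < R(m-k,3), there is a graph G on 2m-1 vertices with no clique of
   size m-k and no independent set of size 3. Join G with a complete graph K_s on
   s = r+1-m fresh vertices (every new vertex adjacent to every other vertex).
   The result has r+m vertices and clique number at most (m-k-1)+s = r-k. In any
   proper colouring with r colours the s cone vertices use s private colours, so G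
   is properly coloured with at most r-s = m-1 colours; each colour class of G is
   independent, hence has at most 2 vertices, and 2(m-1) < 2m-1 is impossible. *)

lemma clique_subset: "is_clique V E S \<Longrightarrow> T \<subseteq> S \<Longrightarrow> is_clique V E T"
  unfolding is_clique_def by blast

lemma indep_subset: "is_indep V E S \<Longrightarrow> T \<subseteq> S \<Longrightarrow> is_indep V E T"
  unfolding is_indep_def by blast

lemma clique_card_less:
  assumes noC: "\<And>S. is_clique V E S \<Longrightarrow> card S \<noteq> p" and S: "is_clique V E S"
  shows "card S < p"
proof (rule ccontr)
  assume "\<not> card S < p"
  then obtain T where "T \<subseteq> S" "card T = p"
    by (meson not_less obtain_subset_with_card_n)
  then show False using noC clique_subset[OF S] by blast
qed

lemma indep_card_less:
  assumes noI: "\<And>S. is_indep V E S \<Longrightarrow> card S \<noteq> a" and S: "is_indep V E S"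
  shows "card S < a"
proof (rule ccontr)
  assume "\<not> card S < a"
  then obtain T where "T \<subseteq> S" "card T = a"
    by (meson not_less obtain_subset_with_card_n)
  then show False using noI indep_subset[OF S] by blast
qed

lemma clique_number_less:
  assumes "finite V" and small: "\<And>S. is_clique V E S \<Longrightarrow> card S < c"
  shows "clique_number V E < c"
proof -
  have "{S. is_clique V E S} \<subseteq> Pow V" by (auto simp: is_clique_def)
  then have "finite (card ` {S. is_clique V E S})"
    using assms(1) by (meson finite_Pow_iff finite_imageI finite_subset)
  moreover have "{} \<in> {S. is_clique V E S}" by (simp add: is_clique_def)
  ultimately show ?thesis
    unfolding clique_number_def using small by (subst Max_less_iff) auto
qed

text \<open>Each colour class of a proper colouring is independent; so if independent
  sets have fewer than a vertices, at least card V / (a-1) colours are used.\<close>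
lemma proper_colouring_bound:
  assumes finV: "finite V"
    and small: "\<And>S. is_indep V E S \<Longrightarrow> card S < a"
    and proper: "\<And>x y. x \<in> V \<Longrightarrow> y \<in> V \<Longrightarrow> x \<noteq> y \<Longrightarrow> f x = f y \<Longrightarrow> {x, y} \<notin> E"
  shows "card V \<le> (a - 1) * card (f ` V)"
proof -
  have class_small: "card {x\<in>V. f x = c} \<le> a - 1" for c
  proof -
    have "is_indep V E {x\<in>V. f x = c}"
      unfolding is_indep_def using proper by auto
    then show ?thesis using small by fastforce
  qed
  have "V = (\<Union>c\<in>f ` V. {x\<in>V. f x = c})" by blast
  then have "card V \<le> (\<Sum>c\<in>f ` V. card {x\<in>V. f x = c})"
    by (metis card_UN_le finV finite_imageI)
  also have "\<dots> \<le> (\<Sum>c\<in>f ` V. a - 1)" by (rule sum_mono) (rule class_small)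
  also have "\<dots> = (a - 1) * card (f ` V)" by simp
  finally show ?thesis .
qed

lemma induced_subgraph:
  assumes "simple_graph V E" and "W \<subseteq> V"
  shows "simple_graph W {e\<in>E. e \<subseteq> W}"
    and "is_clique W {e\<in>E. e \<subseteq> W} S \<Longrightarrow> is_clique V E S"
    and "is_indep W {e\<in>E. e \<subseteq> W} S \<Longrightarrow> is_indep V E S"
proof -
  show "simple_graph W {e\<in>E. e \<subseteq> W}"
    using assms by (auto simp: simple_graph_def intro: finite_subset)
  show "is_clique V E S" if "is_clique W {e\<in>E. e \<subseteq> W} S"
    using that assms(2) by (auto simp: is_clique_def)
  show "is_indep V E S" if S: "is_indep W {e\<in>E. e \<subseteq> W} S"
    unfolding is_indep_def
  proof (intro conjI ballI impI)
    show "S \<subseteq> V" using S assms(2) by (auto simp: is_indep_def)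
    show "{x, y} \<notin> E" if "x \<in> S" "y \<in> S" "x \<noteq> y" for x y
      using S that by (auto simp: is_indep_def)
  qed
qed

lemma graph_below_ramsey:
  assumes "n < ramsey_R p a"
  obtains W F where "simple_graph W F" "card W = n"
    "\<And>S. is_clique W F S \<Longrightarrow> card S < p" "\<And>S. is_indep W F S \<Longrightarrow> card S < a"
proof -
  obtain V E where sg: "simple_graph V E" and cV: "n \<le> card V"
    and noC: "\<And>S. is_clique V E S \<Longrightarrow> card S \<noteq> p"
    and noI: "\<And>S. is_indep V E S \<Longrightarrow> card S \<noteq> a"
    using not_less_Least[OF assms[unfolded ramsey_R_def]] by blast
  obtain W where WV: "W \<subseteq> V" and cW: "card W = n"
    using obtain_subset_with_card_n[OF cV] by blast
  show ?thesis
  proof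
    show "simple_graph W {e\<in>E. e \<subseteq> W}" "card W = n"
      using induced_subgraph(1)[OF sg WV] cW by auto
    show "card S < p" if "is_clique W {e\<in>E. e \<subseteq> W} S" for S
      using clique_card_less[OF noC] induced_subgraph(2)[OF sg WV that] by blast
    show "card S < a" if "is_indep W {e\<in>E. e \<subseteq> W} S" for S
      using indep_card_less[OF noI] induced_subgraph(3)[OF sg WV that] by blast
  qed
qed

lemma fresh_vertices:
  assumes "finite (V :: nat set)"
  obtains K where "finite K" "card K = s" "V \<inter> K = {}"
proof -
  obtain N where "\<forall>x\<in>V. x < N" using assms finite_nat_set_iff_bounded by blast
  then have "V \<inter> {N..<N + s} = {}" by fastforce
  then show ?thesis using that[of "{N..<N + s}"] by simp
qed

definition join_complete :: "nat set \<Rightarrow> nat set set \<Rightarrow> nat set \<Rightarrow> nat set set" where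
  "join_complete W E K = E \<union> {{x, y} | x y. x \<in> K \<and> y \<in> W \<union> K \<and> x \<noteq> y}"

lemma join_simple_graph:
  assumes "simple_graph W E" and "finite K"
  shows "simple_graph (W \<union> K) (join_complete W E K)"
  using assms by (auto simp: simple_graph_def join_complete_def)

lemma join_edge_in_W:
  assumes "W \<inter> K = {}" and "x \<in> W" and "y \<in> W"
  shows "{x, y} \<in> join_complete W E K \<longleftrightarrow> {x, y} \<in> E"
  using assms by (auto simp: join_complete_def doubleton_eq_iff)

lemma join_clique_bound:
  assumes disj: "W \<inter> K = {}" and finK: "finite K"
    and small: "\<And>S. is_clique W E S \<Longrightarrow> card S < p"
    and S: "is_clique (W \<union> K) (join_complete W E K) S"
  shows "card S < p + card K"
proof -
  have "is_clique W E (S \<inter> W)"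
    unfolding is_clique_def
  proof (intro conjI ballI impI)
    show "{x, y} \<in> E" if "x \<in> S \<inter> W" "y \<in> S \<inter> W" "x \<noteq> y" for x y
      using S that join_edge_in_W[OF disj, of x y E] unfolding is_clique_def by blast
  qed blast
  then have "card (S \<inter> W) < p" by (rule small)
  moreover have "card (S \<inter> K) \<le> card K" using finK by (simp add: card_mono)
  moreover have "S = (S \<inter> W) \<union> (S \<inter> K)" using S by (auto simp: is_clique_def)
  then have "card S \<le> card (S \<inter> W) + card (S \<inter> K)" by (metis card_Un_le)
  ultimately show ?thesis by linarith
qed

text \<open>In a proper r-colouring of the join, the vertices of K receive distinct
  colours not used on W; so if W is too large to be properly coloured with the
  remaining r - card K colours, the join arrows (2_r).\<close>
lemma join_vertex_arrow:
  assumes disj: "W \<inter> K = {}" and finW: "finite W" and finK: "finite K"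
    and small: "\<And>S. is_indep W E S \<Longrightarrow> card S < a"
    and large: "(a - 1) * (r - card K) < card W"
  shows "vertex_arrow (W \<union> K) (join_complete W E K) r"
  unfolding vertex_arrow_def
proof (intro allI impI)
  fix f :: "nat \<Rightarrow> nat"
  assume f_range: "f ` (W \<union> K) \<subseteq> {..<r}"
  let ?J = "join_complete W E K"
  show "\<exists>x\<in>W \<union> K. \<exists>y\<in>W \<union> K. x \<noteq> y \<and> f x = f y \<and> {x, y} \<in> ?J"
  proof (rule ccontr)
    assume "\<not> ?thesis"
    then have proper: "\<And>x y. x \<in> W \<union> K \<Longrightarrow> y \<in> W \<union> K \<Longrightarrow> x \<noteq> y \<Longrightarrow> f x = f y \<Longrightarrow> {x, y} \<notin> ?J"
      by blast
    have cone_edge: "{x, y} \<in> ?J" if "x \<in> K" "y \<in> W \<union> K" "x \<noteq> y" for x y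
      using that unfolding join_complete_def by blast
    have "inj_on f K"
    proof (rule inj_onI, rule ccontr)
      fix x y assume "x \<in> K" "y \<in> K" "f x = f y" "x \<noteq> y"
      then show False using proper[of x y] cone_edge[of x y] by blast
    qed
    then have card_fK: "card (f ` K) = card K" by (simp add: card_image)
    have "f ` K \<inter> f ` W = {}"
    proof (rule ccontr)
      assume "f ` K \<inter> f ` W \<noteq> {}"
      then obtain x y where "x \<in> K" "y \<in> W" "f x = f y" by blast
      moreover have "x \<noteq> y" using calculation disj by blast
      ultimately show False using proper[of x y] cone_edge[of x y] by blast
    qed
    then have "f ` W \<subseteq> {..<r} - f ` K" using f_range by blast
    then have "card (f ` W) \<le> card ({..<r} - f ` K)" by (simp add: card_mono)
    also have "\<dots> = r - card K"
    proof -
      have "f ` K \<subseteq> {..<r}" using f_range by blast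
      then show ?thesis using card_Diff_subset[of "f ` K" "{..<r}"] card_fK finK by simp
    qed
    finally have few_colours: "card (f ` W) \<le> r - card K" .
    have "card W \<le> (a - 1) * card (f ` W)"
    proof (rule proper_colouring_bound[OF finW small])
      show "{x, y} \<notin> E" if "x \<in> W" "y \<in> W" "x \<noteq> y" "f x = f y" for x y
        using proper[of x y] that join_edge_in_W[OF disj] by blast
    qed
    also have "\<dots> \<le> (a - 1) * (r - card K)" using few_colours by simp
    finally show False using large by linarith
  qed
qed

lemma Fv_le_card: "(V, E) \<in> Hv r q \<Longrightarrow> Fv r q \<le> card V"
  unfolding Fv_def by (rule Least_le) blast

theorem theorem2p1:
  fixes m k r :: nat
  assumes "0 < m" and "0 < k"
    and "2 * m - 1 < ramsey_R (m - k) 3"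
    and "m \<ge> k + 3"
    and "r \<ge> m - 1"
  shows "Hv r (r + 1 - k) \<noteq> {} \<and> Fv r (r + 1 - k) \<le> r + m"
proof -
  obtain W E where sg: "simple_graph W E" and cW: "card W = 2 * m - 1"
    and cliques: "\<And>S. is_clique W E S \<Longrightarrow> card S < m - k"
    and indeps: "\<And>S. is_indep W E S \<Longrightarrow> card S < 3"
    using graph_below_ramsey[OF assms(3)] by blast
  have finW: "finite W" using sg by (simp add: simple_graph_def)
  obtain K where finK: "finite K" and cK: "card K = r + 1 - m" and disj: "W \<inter> K = {}"
    using fresh_vertices[OF finW] by blast
  let ?V = "W \<union> K" and ?E = "join_complete W E K"
  have sg': "simple_graph ?V ?E" using join_simple_graph[OF sg finK] .
  have "clique_number ?V ?E < r + 1 - k"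
    using clique_number_less[of ?V ?E "m - k + card K"] finW finK
      join_clique_bound[OF disj finK cliques] cK assms by auto
  moreover have "vertex_arrow ?V ?E r"
    using join_vertex_arrow[OF disj finW finK indeps] cW cK assms by auto
  ultimately have inH: "(?V, ?E) \<in> Hv r (r + 1 - k)"
    using sg' by (simp add: Hv_def)
  have "card ?V = r + m" using card_Un_disjoint[OF finW finK disj] cW cK assms by simp
  then show ?thesis using inH Fv_le_card[OF inH] by auto
qed

end
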